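(* Let $w\ge 2$, $h\ge 3$, $1\le m<w$, and $G=P_w(U)\sqcap C_h$ where $U=\{1,2,\dots,m\}$ or $U=\{w-m+1,\dots,w\}$. (1) If $h\le 2m$, then $Z(G)\le h$. (2) If $2m<h<4m$, then $Z(G)\le 2m$. (3) If $h>4m$, then $Z(G)\le\lceil h/2\rceil$.
   Context: All graphs are finite, simple and undirected. Zero forcing: given a graph $G$ and a set $S\subseteq V(G)$ of initially filled vertices, the color change rule says that if a filled vertex $v$ has exactly one unfilled neighbor $u$, then $v$ forces $u$ to become filled. $S$ is a zero forcing set if repeatedly applying this rule eventually fills every vertex of $G$. The zero forcing number $Z(G)$ is the minimum cardinality of a zero forcing set of $G$. The path $P_n$ has vertex set $\{1,\dots,n\}$ and edges $\{k,k+1\}$ for $1\le k\le n-1$; the cycle $C_n$ ($n\ge3$) has vertex set $\{1,\dots,n\}$ and edges $\{k,k+1\}$ for $1\le k\le n-1$ together with $\{n,1\}$. Generalized hierarchical product: for graphs $W,H$ and $U\subseteq V(W)$ (the root set), $W(U)\sqcap H$ is the graph with vertex set $V(W)\times V(H)$ in which $(x_1,y_1)$ and $(x_2,y_2)$ are adjacent iff either ($x_1=x_2\in U$ and $y_1y_2\in E(H)$) or ($y_1=y_2$ and $x_1x_2\in E(W)$). *)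

theory Defs
  imports Complex_Main
begin

text \<open>A finite simple graph is given by a vertex set V and a symmetric,
irreflexive adjacency predicate adj (only its restriction to V matters).\<close>

definition nbrs :: "'a set \<Rightarrow> ('a \<Rightarrow> 'a \<Rightarrow> bool) \<Rightarrow> 'a \<Rightarrow> 'a set" where
  "nbrs V adj v = {u \<in> V. adj v u}"

definition force_step :: "'a set \<Rightarrow> ('a \<Rightarrow> 'a \<Rightarrow> bool) \<Rightarrow> 'a set \<Rightarrow> 'a set \<Rightarrow> bool" where
  "force_step V adj S S' \<longleftrightarrow>
     (\<exists>v\<in>S. \<exists>u. nbrs V adj v - S = {u} \<and> S' = insert u S)"

definition zero_forcing_set :: "'a set \<Rightarrow> ('a \<Rightarrow> 'a \<Rightarrow> bool) \<Rightarrow> 'a set \<Rightarrow> bool" where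
  "zero_forcing_set V adj S \<longleftrightarrow> S \<subseteq> V \<and> (force_step V adj)\<^sup>*\<^sup>* S V"

definition zero_forcing_number :: "'a set \<Rightarrow> ('a \<Rightarrow> 'a \<Rightarrow> bool) \<Rightarrow> nat" where
  "zero_forcing_number V adj = (LEAST k. \<exists>S. zero_forcing_set V adj S \<and> card S = k)"

text \<open>Path P_n on {1..n} and cycle C_n on {1..n}.\<close>
definition path_adj :: "nat \<Rightarrow> nat \<Rightarrow> bool" where
  "path_adj x y \<longleftrightarrow> y = x + 1 \<or> x = y + 1"

definition cycle_adj :: "nat \<Rightarrow> nat \<Rightarrow> nat \<Rightarrow> bool" where
  "cycle_adj n x y \<longleftrightarrow> y = x + 1 \<or> x = y + 1 \<or> (x = n \<and> y = 1) \<or> (x = 1 \<and> y = n)"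

definition hprod_verts :: "'a set \<Rightarrow> 'b set \<Rightarrow> ('a \<times> 'b) set" where
  "hprod_verts VW VH = VW \<times> VH"

definition hprod_adj :: "('a \<Rightarrow> 'a \<Rightarrow> bool) \<Rightarrow> 'a set \<Rightarrow> ('b \<Rightarrow> 'b \<Rightarrow> bool)
    \<Rightarrow> ('a \<times> 'b) \<Rightarrow> ('a \<times> 'b) \<Rightarrow> bool" where
  "hprod_adj adjW U adjH p q \<longleftrightarrow>
     (fst p = fst q \<and> fst p \<in> U \<and> adjH (snd p) (snd q)) \<or>
     (snd p = snd q \<and> adjW (fst p) (fst q))"

end

theory Submission
  imports Defs
begin

(*
  Seed the last column in the rows 1..2m and in the even rows 2m+2, ..., 2m+2j. Along the
  seeded rows forcing runs leftwards through the non-root columns into column m. From there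
  the root block of rows 1..2m fills up, the odd rows between the seeded even ones are filled
  upwards one at a time, and the remaining at most 2m rows of the cycle are filled from both
  ends, the upper end through the cycle edges between rows h and 1. Once the root columns are
  full, the unseeded rows are forced left to right through the non-root columns. With j = 0
  this uses 2m seeds, with j = ceil(h/2) - 2m exactly ceil(h/2); seeding the whole last column
  works for every h. The root set {w-m+1..w} is the mirror image of {1..m}.
*)

section \<open>Forcing schedules\<close>

(* Once every vertex stamped earlier than u is filled, v is filled and u is its only unfilled
   neighbour, so v forces u. *)
definition timely_force :: "'a set \<Rightarrow> ('a \<Rightarrow> 'a \<Rightarrow> bool) \<Rightarrow> ('a \<Rightarrow> nat) \<Rightarrow> 'a \<Rightarrow> 'a \<Rightarrow> bool" where
  "timely_force V adj t v u \<longleftrightarrow>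
     v \<in> V \<and> adj v u \<and> t v < t u \<and> (\<forall>z\<in>V. adj v z \<longrightarrow> z \<noteq> u \<longrightarrow> t z < t u)"

definition forcing_schedule :: "'a set \<Rightarrow> ('a \<Rightarrow> 'a \<Rightarrow> bool) \<Rightarrow> 'a set \<Rightarrow> ('a \<Rightarrow> nat) \<Rightarrow> bool" where
  "forcing_schedule V adj S t \<longleftrightarrow> (\<forall>u\<in>V - S. \<exists>v. timely_force V adj t v u)"

lemma force_steps_insert:
  assumes reach: "(force_step V adj)\<^sup>*\<^sup>* S T" and "v \<in> T" "u \<in> V" "adj v u"
    and nbrs: "nbrs V adj v \<subseteq> insert u T"
  shows "(force_step V adj)\<^sup>*\<^sup>* S (insert u T)"
proof (cases "u \<in> T")
  case True
  then show ?thesis using reach by (simp add: insert_absorb)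
next
  case False
  then have "nbrs V adj v - T = {u}" using assms by (auto simp: nbrs_def)
  then have "force_step V adj T (insert u T)" using \<open>v \<in> T\<close> by (auto simp: force_step_def)
  with reach show ?thesis by (rule rtranclp.rtrancl_into_rtrancl)
qed

lemma force_steps_level:
  assumes sched: "forcing_schedule V adj S t"
    and reach: "(force_step V adj)\<^sup>*\<^sup>* S (S \<union> {u\<in>V. t u < k})"
    and "finite F" "F \<subseteq> {u\<in>V. t u = k}"
  shows "(force_step V adj)\<^sup>*\<^sup>* S (S \<union> {u\<in>V. t u < k} \<union> F)"
  using \<open>finite F\<close> \<open>F \<subseteq> _\<close>
proof (induction F rule: finite_induct)
  case empty
  then show ?case using reach by simp
next
  case (insert u F)
  let ?T = "S \<union> {u\<in>V. t u < k} \<union> F"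
  have IH: "(force_step V adj)\<^sup>*\<^sup>* S ?T" and "u \<in> V" "t u = k"
    using insert by auto
  show ?case
  proof (cases "u \<in> S")
    case True
    then have "S \<union> {u\<in>V. t u < k} \<union> insert u F = ?T" by blast
    with IH show ?thesis by simp
  next
    case False
    then obtain v where "timely_force V adj t v u"
      using sched \<open>u \<in> V\<close> unfolding forcing_schedule_def by blast
    then have "v \<in> ?T" "adj v u" "nbrs V adj v \<subseteq> insert u ?T"
      using \<open>t u = k\<close> by (auto simp: timely_force_def nbrs_def)
    then have "(force_step V adj)\<^sup>*\<^sup>* S (insert u ?T)"
      using force_steps_insert[OF IH _ \<open>u \<in> V\<close>] by blast
    then show ?thesis by (simp add: Un_insert_right)
  qed
qed

lemma forcing_schedule_zero_forcing_set:
  assumes sched: "forcing_schedule V adj S t" and "S \<subseteq> V" "finite V"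
  shows "zero_forcing_set V adj S"
proof -
  have reach: "(force_step V adj)\<^sup>*\<^sup>* S (S \<union> {u\<in>V. t u < k})" for k
  proof (induction k)
    case 0
    then show ?case by simp
  next
    case (Suc k)
    have "S \<union> {u\<in>V. t u < Suc k} = S \<union> {u\<in>V. t u < k} \<union> {u\<in>V. t u = k}" by auto
    then show ?case
      using force_steps_level[OF sched Suc] \<open>finite V\<close> by simp
  qed
  have "t u < Suc (Max (t ` V))" if "u \<in> V" for u
    using \<open>finite V\<close> that by (simp add: le_imp_less_Suc)
  then have "S \<union> {u\<in>V. t u < Suc (Max (t ` V))} = V" using \<open>S \<subseteq> V\<close> by auto
  then show ?thesis using reach \<open>S \<subseteq> V\<close> by (metis zero_forcing_set_def)
qed

lemma zero_forcing_number_le_card: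
  assumes "zero_forcing_set V adj S"
  shows "zero_forcing_number V adj \<le> card S"
  unfolding zero_forcing_number_def using assms by (intro Least_le) blast

lemma forcing_schedule_iso:
  assumes f: "\<And>q. q \<in> V' \<Longrightarrow> f q \<in> V" and g: "\<And>p. p \<in> V \<Longrightarrow> g p \<in> V'"
    and fg: "\<And>p. p \<in> V \<Longrightarrow> f (g p) = p" and gf: "\<And>q. q \<in> V' \<Longrightarrow> g (f q) = q"
    and adj: "\<And>p q. p \<in> V \<Longrightarrow> q \<in> V \<Longrightarrow> adj' (g p) (g q) = adj p q"
    and sched: "forcing_schedule V adj S t"
  shows "forcing_schedule V' adj' (g ` S) (t \<circ> f)"
  unfolding forcing_schedule_def
proof
  fix u assume u: "u \<in> V' - g ` S"
  then have "f u \<in> V - S" using f gf by (metis Diff_iff image_eqI)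
  then obtain v where v: "timely_force V adj t v (f u)"
    using sched unfolding forcing_schedule_def by blast
  have "v \<in> V" using v by (simp add: timely_force_def)
  have "timely_force V' adj' (t \<circ> f) (g v) u"
    unfolding timely_force_def
  proof (intro conjI ballI impI)
    show "g v \<in> V'" using g \<open>v \<in> V\<close> .
    show "adj' (g v) u" using v adj[OF \<open>v \<in> V\<close> \<open>f u \<in> V - S\<close>[THEN DiffD1]] gf u
      by (simp add: timely_force_def)
    show "(t \<circ> f) (g v) < (t \<circ> f) u" using v fg \<open>v \<in> V\<close> by (simp add: timely_force_def)
    fix z assume "z \<in> V'" "adj' (g v) z" "z \<noteq> u"
    then have "adj v (f z)" "f z \<noteq> f u" using adj[OF \<open>v \<in> V\<close> f] gf u by (metis DiffD1)+
    then show "(t \<circ> f) z < (t \<circ> f) u" using v f \<open>z \<in> V'\<close> by (simp add: timely_force_def)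
  qed
  then show "\<exists>v. timely_force V' adj' (t \<circ> f) v u" ..
qed

lemma zero_forcing_number_hprod_path_le:
  assumes "1 \<le> w" and "finite VH"
  shows "zero_forcing_number (hprod_verts {1..w} VH) (hprod_adj path_adj U adjH) \<le> card VH"
proof -
  let ?V = "{1..w} \<times> VH" and ?adj = "hprod_adj path_adj U adjH" and ?S = "Pair w ` VH"
  have "timely_force ?V ?adj (\<lambda>p. w - fst p) (x + 1, y) (x, y)"
    if "(x, y) \<in> ?V - ?S" for x y
    using that unfolding timely_force_def hprod_adj_def path_adj_def by auto
  then have "forcing_schedule ?V ?adj ?S (\<lambda>p. w - fst p)"
    unfolding forcing_schedule_def by blast
  then have "zero_forcing_set ?V ?adj ?S"
    by (intro forcing_schedule_zero_forcing_set) (use assms in auto)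
  moreover have "card ?S = card VH" by (simp add: card_image inj_on_def)
  ultimately show ?thesis
    unfolding hprod_verts_def by (metis zero_forcing_number_le_card)
qed

section \<open>A seed for the root set {1..m}\<close>

(* Vertex (x, y) lies in column x of the path and row y of the cycle; columns 1..m are the roots.
   The rows above 2m + 2j form the cap. *)
locale left_rooted_product =
  fixes w h m j :: nat
  assumes m_pos: "1 \<le> m" and m_less_w: "m < w"
    and cap_pos: "2*m + 2*j < h" and cap_le: "h \<le> 4*m + 2*j"
begin

definition verts :: "(nat \<times> nat) set" where
  "verts = {1..w} \<times> {1..h}"

definition edge :: "nat \<times> nat \<Rightarrow> nat \<times> nat \<Rightarrow> bool" where
  "edge = hprod_adj path_adj {1..m} (cycle_adj h)"

definition seed_row :: "nat \<Rightarrow> bool" where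
  "seed_row y \<longleftrightarrow> y \<le> 2*m \<or> (y \<le> 2*m + 2*j \<and> even y)"

definition seed :: "(nat \<times> nat) set" where
  "seed = Pair w ` {y \<in> {1..h}. seed_row y}"

(* The stamps order the phases of the forcing: the seeded rows right of the roots (stamps below w),
   then in the root columns the block of rows 1..2m (the wedge m+1 <= x+y, y <= m+x leftwards,
   the rest of each column vertically away from the wedge), the strip of rows up to 2m+2j
   upwards, the cap inwards from its two ends with the triangle in its middle left to right,
   and last the unseeded rows left to right. *)
definition time :: "nat \<Rightarrow> nat \<Rightarrow> nat" where
  "time x y =
    (if m < x then (if seed_row y then w - x else w + 3*m + 2*j + x)
     else if y \<le> m then (if m + 1 \<le> x + y then w - x else w + m - y)
     else if y \<le> 2*m then (if y \<le> m + x then w - x else w + y - m - 1)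
     else if y \<le> 2*m + 2*j then (if x = m \<and> even y then w - m else w - m + y - 1)
     else if x + min (y - (2*m + 2*j)) (h + 1 - y) \<le> m + 1
       then w + m + 2*j + min (y - (2*m + 2*j)) (h + 1 - y) - 1
     else w + 2*m + 2*j + x)"

abbreviation forces :: "nat \<times> nat \<Rightarrow> nat \<times> nat \<Rightarrow> bool" where
  "forces \<equiv> timely_force verts edge (case_prod time)"

lemma edge_iff: "edge (a,b) (c,d) \<longleftrightarrow>
   (c = a \<and> 1 \<le> a \<and> a \<le> m \<and> (d = b+1 \<or> b = d+1 \<or> (b = h \<and> d = 1) \<or> (b = 1 \<and> d = h))) \<or>
   (d = b \<and> (c = a+1 \<or> a = c+1))"
  unfolding edge_def hprod_adj_def path_adj_def cycle_adj_def by auto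

lemma edge_cases:
  assumes "edge (a,b) (c,d)"
  obtains (right) "c = a+1" "d = b" | (left) "a = c+1" "d = b"
   | (up) "c = a" "a \<le> m" "d = b+1" | (down) "c = a" "a \<le> m" "b = d+1"
   | (wrap_up) "c = a" "a \<le> m" "b = h" "d = 1" | (wrap_down) "c = a" "a \<le> m" "b = 1" "d = h"
  using assms unfolding edge_iff by blast

lemma forcesI:
  assumes "(a,b) \<in> verts" "edge (a,b) (x,y)" "time a b < time x y"
   and "\<And>c d. 1 \<le> c \<Longrightarrow> c \<le> w \<Longrightarrow> 1 \<le> d \<Longrightarrow> d \<le> h \<Longrightarrow> edge (a,b) (c,d) \<Longrightarrow> (c,d) \<noteq> (x,y)
          \<Longrightarrow> time c d < time x y"
  shows "forces (a,b) (x,y)"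
  using assms unfolding timely_force_def verts_def by auto

lemma time_seed_row: "m \<le> c \<Longrightarrow> 1 \<le> d \<Longrightarrow> seed_row d \<Longrightarrow> time c d = w - c"
  unfolding time_def seed_row_def min_def by auto

lemma time_wedge: "1 \<le> d \<Longrightarrow> d \<le> 2*m \<Longrightarrow> m+1 \<le> c+d \<Longrightarrow> d \<le> m+c \<Longrightarrow> time c d = w - c"
  unfolding time_def seed_row_def min_def by auto

lemma time_below_wedge: "c + d \<le> m \<Longrightarrow> time c d = w+m-d"
  unfolding time_def seed_row_def min_def by auto

lemma time_above_wedge: "c \<le> m \<Longrightarrow> d \<le> 2*m \<Longrightarrow> m + c < d \<Longrightarrow> time c d = w+d-m-1"
  unfolding time_def seed_row_def min_def by auto

lemma time_block_le_dist:
  "1 \<le> c \<Longrightarrow> c \<le> m \<Longrightarrow> 1 \<le> d \<Longrightarrow> d \<le> 2*m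
   \<Longrightarrow> time c d \<le> w + (if d \<le> m then m - d else d - m - 1)"
  unfolding time_def seed_row_def min_def by auto

lemma time_block_le: "1 \<le> c \<Longrightarrow> 1 \<le> d \<Longrightarrow> d \<le> 2*m \<Longrightarrow> time c d \<le> w + m - 1"
  using m_pos m_less_w unfolding time_def seed_row_def min_def by auto

lemma time_strip:
  "c \<le> m \<Longrightarrow> 2*m < d \<Longrightarrow> d \<le> 2*m+2*j \<Longrightarrow> \<not> (c = m \<and> even d) \<Longrightarrow> time c d = w-m+d-1"
  unfolding time_def seed_row_def min_def by auto

lemma time_strip_le:
  "1 \<le> c \<Longrightarrow> c \<le> m \<Longrightarrow> 1 \<le> d \<Longrightarrow> d \<le> 2*m+2*j \<Longrightarrow> time c d \<le> w + m + (d - 2*m) - 1"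
  using m_pos m_less_w unfolding time_def seed_row_def min_def by auto

lemma time_cap_lower_le:
  "1 \<le> c \<Longrightarrow> c \<le> m \<Longrightarrow> 1 \<le> d \<Longrightarrow> d - (2*m+2*j) \<le> h+1-d \<Longrightarrow> c + (d - (2*m+2*j)) \<le> m+1
   \<Longrightarrow> time c d + 1 \<le> w + m + 2*j + (d - (2*m+2*j))"
  using m_pos m_less_w cap_pos unfolding time_def seed_row_def min_def by auto

lemma time_cap_lower:
  "c \<le> m \<Longrightarrow> 2*m+2*j < d \<Longrightarrow> d - (2*m+2*j) \<le> h+1-d \<Longrightarrow> c + (d - (2*m+2*j)) \<le> m+1
   \<Longrightarrow> time c d = w + m + 2*j + (d - (2*m+2*j)) - 1"
  unfolding time_def seed_row_def min_def by auto

lemma time_cap_upper: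
  "c \<le> m \<Longrightarrow> 2*m+2*j < d \<Longrightarrow> h+1-d < d - (2*m+2*j) \<Longrightarrow> c + (h+1-d) \<le> m+1
   \<Longrightarrow> time c d = w + m + 2*j + (h+1-d) - 1"
  unfolding time_def seed_row_def min_def by auto

lemma time_cap_middle:
  "c \<le> m \<Longrightarrow> 2*m+2*j < d \<Longrightarrow> m+1 < c + min (d - (2*m+2*j)) (h+1-d)
   \<Longrightarrow> time c d = w + 2*m + 2*j + c"
  unfolding time_def seed_row_def min_def by (auto split: if_splits)

lemma time_left_le: "1 \<le> c \<Longrightarrow> c \<le> m \<Longrightarrow> 1 \<le> d \<Longrightarrow> time c d \<le> w + 2*m + 2*j + c"
  using m_pos m_less_w unfolding time_def seed_row_def min_def by auto

lemma time_free_row: "m < c \<Longrightarrow> \<not> seed_row d \<Longrightarrow> time c d = w + 3*m + 2*j + c"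
  unfolding time_def seed_row_def min_def by auto

lemma forces_seed_row:
  assumes "1 \<le> y" "y \<le> h" "m \<le> x" "x < w" "seed_row y"
  shows "forces (x+1,y) (x,y)"
proof (rule forcesI)
  show "(x+1,y) \<in> verts" using assms unfolding verts_def by auto
  show "edge (x+1,y) (x,y)" by (simp add: edge_iff)
  have tu: "time x y = w - x" by (rule time_seed_row) (use assms in auto)
  have "time (x+1) y = w - (x+1)" by (rule time_seed_row) (use assms in auto)
  then show "time (x+1) y < time x y" using tu assms by arith
  fix c d assume c: "1 \<le> c" "c \<le> w" "1 \<le> d" "d \<le> h"
    and a: "edge (x+1,y) (c,d)" and ne: "(c,d) \<noteq> (x,y)"
  from a show "time c d < time x y"
  proof (cases rule: edge_cases)
    case right
    have "time c d = w - c" by (rule time_seed_row) (use assms right in auto)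
    then show ?thesis using right tu c assms by arith
  next
    case left then show ?thesis using ne by auto
  qed (use assms in auto)
qed

lemma forces_wedge:
  assumes "1 \<le> x" "x < m" "y \<le> 2*m" "m+1 \<le> x+y" "y \<le> m+x"
  shows "forces (x+1,y) (x,y)"
proof (rule forcesI)
  show "(x+1,y) \<in> verts" using assms m_less_w cap_pos unfolding verts_def by auto
  show "edge (x+1,y) (x,y)" by (simp add: edge_iff)
  have tu: "time x y = w - x" by (rule time_wedge) (use assms in auto)
  have "time (x+1) y = w - (x+1)" by (rule time_wedge) (use assms in auto)
  then show "time (x+1) y < time x y" using tu assms m_less_w by arith
  fix c d assume c: "1 \<le> c" "c \<le> w" "1 \<le> d" "d \<le> h"
    and a: "edge (x+1,y) (c,d)" and ne: "(c,d) \<noteq> (x,y)"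
  from a show "time c d < time x y"
  proof (cases rule: edge_cases)
    case left then show ?thesis using ne by auto
  next
    case wrap_up then show ?thesis using assms cap_pos by auto
  next
    case wrap_down then show ?thesis using assms by auto
  qed (use assms tu c m_less_w in \<open>simp_all add: time_wedge\<close>)
qed

lemma forces_below_wedge:
  assumes "1 \<le> x" "x < m" "1 \<le> y" "x+y \<le> m"
  shows "forces (x,y+1) (x,y)"
proof (rule forcesI)
  show "(x,y+1) \<in> verts" using assms m_less_w cap_pos unfolding verts_def by auto
  show "edge (x,y+1) (x,y)" using assms by (simp add: edge_iff)
  have tu: "time x y = w + m - y" by (rule time_below_wedge) (use assms in auto)
  have "time x (y+1) \<le> w + (if y+1 \<le> m then m - (y+1) else (y+1) - m - 1)"
    by (rule time_block_le_dist) (use assms in auto)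
  then show "time x (y+1) < time x y" using tu assms by (auto split: if_splits)
  fix c d assume c: "1 \<le> c" "c \<le> w" "1 \<le> d" "d \<le> h"
    and a: "edge (x,y+1) (c,d)" and ne: "(c,d) \<noteq> (x,y)"
  have nbr: "time c d < time x y" if "1 \<le> c" "c \<le> m" "y < d" "d \<le> y + 2" for c d
    using time_block_le_dist[of c d] that assms tu by (auto split: if_splits)
  from a show "time c d < time x y"
  proof (cases rule: edge_cases)
    case down then show ?thesis using ne by auto
  next
    case wrap_up then show ?thesis using assms cap_pos by auto
  next
    case wrap_down then show ?thesis using assms by auto
  qed (use nbr assms c in auto)
qed

lemma forces_above_wedge:
  assumes "1 \<le> x" "x < m" "y \<le> 2*m" "m+x < y"
  shows "forces (x,y-1) (x,y)"
proof (rule forcesI)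
  show "(x,y-1) \<in> verts" using assms m_less_w cap_pos unfolding verts_def by auto
  show "edge (x,y-1) (x,y)" using assms by (auto simp add: edge_iff)
  have tu: "time x y = w + y - m - 1" by (rule time_above_wedge) (use assms in auto)
  have "time x (y-1) \<le> w + (if y-1 \<le> m then m - (y-1) else (y-1) - m - 1)"
    by (rule time_block_le_dist) (use assms in auto)
  then show "time x (y-1) < time x y" using tu assms by (auto split: if_splits)
  fix c d assume c: "1 \<le> c" "c \<le> w" "1 \<le> d" "d \<le> h"
    and a: "edge (x,y-1) (c,d)" and ne: "(c,d) \<noteq> (x,y)"
  have nbr: "time c d < time x y" if "1 \<le> c" "c \<le> m" "1 \<le> d" "d < y" "y \<le> d + 2" for c d
    using time_block_le_dist[of c d] that assms tu by (auto split: if_splits)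
  from a show "time c d < time x y"
  proof (cases rule: edge_cases)
    case up then show ?thesis using ne assms by auto
  next
    case wrap_up then show ?thesis using assms cap_pos by auto
  next
    case wrap_down then show ?thesis using assms by auto
  qed (use nbr assms c in auto)
qed

lemma forces_strip:
  assumes "1 \<le> x" "x \<le> m" "2*m < y" "y \<le> 2*m+2*j" "\<not> (x = m \<and> even y)"
  shows "forces (x,y-1) (x,y)"
proof (rule forcesI)
  show "(x,y-1) \<in> verts" using assms m_less_w cap_pos unfolding verts_def by auto
  show "edge (x,y-1) (x,y)" using assms by (auto simp add: edge_iff)
  have tu: "time x y = w - m + y - 1" by (rule time_strip) (use assms in auto)
  have "time x (y-1) \<le> w + m + ((y-1) - 2*m) - 1" by (rule time_strip_le) (use assms in auto)
  then show "time x (y-1) < time x y" using tu assms m_less_w by arith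
  fix c d assume c: "1 \<le> c" "c \<le> w" "1 \<le> d" "d \<le> h"
    and a: "edge (x,y-1) (c,d)" and ne: "(c,d) \<noteq> (x,y)"
  have lower: "time c d < time x y" if "c \<le> m" "d < y"
    using time_strip_le[of c d] that assms tu c m_less_w by linarith
  from a show "time c d < time x y"
  proof (cases rule: edge_cases)
    case right
    show ?thesis
    proof (cases "x = m")
      case True
      then have "seed_row (y-1)" using assms unfolding seed_row_def by presburger
      then have "time c d = w - c" using right True assms m_pos by (intro time_seed_row) auto
      then show ?thesis using right tu c assms m_less_w by arith
    qed (use right assms lower in auto)
  next
    case up then show ?thesis using ne assms by auto
  next
    case wrap_up then show ?thesis using assms cap_pos by auto
  next
    case wrap_down then show ?thesis using assms m_pos by auto
  qed (use assms lower in auto)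
qed

lemma forces_cap_lower:
  assumes "1 \<le> x" "x \<le> m" "2*m+2*j < y" "y \<le> h"
    "y - (2*m+2*j) \<le> h+1-y" "x + (y - (2*m+2*j)) \<le> m+1"
  shows "forces (x,y-1) (x,y)"
proof (rule forcesI)
  show "(x,y-1) \<in> verts" using assms m_less_w cap_pos unfolding verts_def by auto
  show "edge (x,y-1) (x,y)" using assms by (auto simp add: edge_iff)
  have tu: "time x y = w + m + 2*j + (y - (2*m+2*j)) - 1" by (rule time_cap_lower) (use assms in auto)
  have "time x (y-1) + 1 \<le> w + m + 2*j + ((y-1) - (2*m+2*j))"
    by (rule time_cap_lower_le) (use assms in auto)
  then show "time x (y-1) < time x y" using tu assms m_less_w by arith
  fix c d assume c: "1 \<le> c" "c \<le> w" "1 \<le> d" "d \<le> h"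
    and a: "edge (x,y-1) (c,d)" and ne: "(c,d) \<noteq> (x,y)"
  have nbr: "time c d < time x y" if "1 \<le> c" "c \<le> m" "1 \<le> d" "d < y" "c + d \<le> x + y" for c d
    using time_cap_lower_le[of c d] that assms tu m_less_w by linarith
  from a show "time c d < time x y"
  proof (cases rule: edge_cases)
    case right
    show ?thesis
    proof (cases "x = m")
      case True
      then have "d = 2*m+2*j" using right assms by arith
      then have "time c d = w - c"
        using right True m_pos by (intro time_seed_row) (auto simp: seed_row_def)
      then show ?thesis using right tu c assms m_less_w by arith
    qed (use right assms nbr in auto)
  next
    case up then show ?thesis using ne assms by auto
  next
    case wrap_up then show ?thesis using assms cap_pos by auto
  next
    case wrap_down then show ?thesis using assms m_pos by auto
  qed (use nbr assms c in auto)
qed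

lemma forces_cap_upper:
  assumes "1 \<le> x" "x \<le> m" "2*m+2*j < y" "y < h"
    "h+1-y < y - (2*m+2*j)" "x + (h+1-y) \<le> m+1"
  shows "forces (x,y+1) (x,y)"
proof (rule forcesI)
  show "(x,y+1) \<in> verts" using assms m_less_w cap_pos unfolding verts_def by auto
  show "edge (x,y+1) (x,y)" using assms by (auto simp add: edge_iff)
  have tu: "time x y = w + m + 2*j + (h+1-y) - 1" by (rule time_cap_upper) (use assms in auto)
  have nbr: "time c d < time x y" if "y < d" "d \<le> h" "c + (h+1-d) \<le> m+1" for c d
  proof -
    have "time c d = w + m + 2*j + (h+1-d) - 1" by (rule time_cap_upper) (use assms that in auto)
    then show ?thesis using that tu assms m_less_w by arith
  qed
  show "time x (y+1) < time x y" by (rule nbr) (use assms in auto)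
  fix c d assume c: "1 \<le> c" "c \<le> w" "1 \<le> d" "d \<le> h"
    and a: "edge (x,y+1) (c,d)" and ne: "(c,d) \<noteq> (x,y)"
  from a show "time c d < time x y"
  proof (cases rule: edge_cases)
    case down then show ?thesis using ne assms by auto
  next
    case wrap_up
    have "time c d \<le> w + m - 1" by (rule time_block_le) (use assms wrap_up c m_pos in auto)
    then show ?thesis using tu assms m_less_w by arith
  next
    case wrap_down then show ?thesis using assms m_pos by auto
  qed (use nbr assms c in auto)
qed

lemma forces_cap_top:
  assumes "1 \<le> x" "x \<le> m" "2*m+2*j+1 < h"
  shows "forces (x,1) (x,h)"
proof (rule forcesI)
  show "(x,1) \<in> verts" using assms m_less_w cap_pos unfolding verts_def by auto
  show "edge (x,1) (x,h)" using assms by (auto simp add: edge_iff)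
  have tu: "time x h = w + m + 2*j" using time_cap_upper[of x h] assms by auto
  have nbr: "time c d < time x h" if "1 \<le> c" "c \<le> m + 1" "1 \<le> d" "d \<le> 2" for c d
    using time_block_le[of c d] that tu assms m_pos m_less_w by linarith
  show "time x 1 < time x h" by (rule nbr) (use assms in auto)
  fix c d assume c: "1 \<le> c" "c \<le> w" "1 \<le> d" "d \<le> h"
    and a: "edge (x,1) (c,d)" and ne: "(c,d) \<noteq> (x,h)"
  from a show "time c d < time x h"
  proof (cases rule: edge_cases)
    case wrap_down then show ?thesis using ne by auto
  qed (use nbr assms c in auto)
qed

lemma forces_cap_middle:
  assumes "1 \<le> x" "x \<le> m" "2*m+2*j < y" "y \<le> h" "m+1 < x + min (y - (2*m+2*j)) (h+1-y)"
  shows "forces (x-1,y) (x,y)"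
proof -
  \<comment> \<open>the cap has at most 2m rows, so its first column is filled vertically\<close>
  have "2 \<le> x" using assms cap_le by auto
  have tu: "time x y = w + 2*m + 2*j + x" by (rule time_cap_middle) (use assms in auto)
  have nbr: "time c d < time x y" if "1 \<le> c" "c < x" "1 \<le> d" for c d
    using time_left_le[of c d] that assms tu by linarith
  show ?thesis
  proof (rule forcesI)
    show "(x-1,y) \<in> verts" using assms \<open>2 \<le> x\<close> m_less_w unfolding verts_def by auto
    show "edge (x-1,y) (x,y)" using assms \<open>2 \<le> x\<close> by (auto simp add: edge_iff)
    show "time (x-1) y < time x y" by (rule nbr) (use assms \<open>2 \<le> x\<close> in auto)
    fix c d assume c: "1 \<le> c" "c \<le> w" "1 \<le> d" "d \<le> h"
      and a: "edge (x-1,y) (c,d)" and ne: "(c,d) \<noteq> (x,y)"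
    from a show "time c d < time x y"
    proof (cases rule: edge_cases)
      case right then show ?thesis using ne \<open>2 \<le> x\<close> by auto
    qed (use nbr c \<open>2 \<le> x\<close> in auto)
  qed
qed

lemma forces_free_row:
  assumes "1 \<le> y" "y \<le> h" "m < x" "x \<le> w" "\<not> seed_row y"
  shows "forces (x-1,y) (x,y)"
proof (rule forcesI)
  show "(x-1,y) \<in> verts" using assms m_pos unfolding verts_def by auto
  show "edge (x-1,y) (x,y)" using assms m_pos by (auto simp add: edge_iff)
  have tu: "time x y = w + 3*m + 2*j + x" by (rule time_free_row) (use assms in auto)
  have nbr: "time c d < time x y" if "1 \<le> c" "c < x" "1 \<le> d" "d \<le> h" "c \<le> m \<or> d = y" for c d
  proof (cases "c \<le> m")
    case True
    then show ?thesis using time_left_le[of c d] that tu assms by linarith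
  next
    case False
    then have "time c d = w + 3*m + 2*j + c" using that assms by (intro time_free_row) auto
    then show ?thesis using tu that by arith
  qed
  show "time (x-1) y < time x y" by (rule nbr) (use assms m_pos in auto)
  fix c d assume c: "1 \<le> c" "c \<le> w" "1 \<le> d" "d \<le> h"
    and a: "edge (x-1,y) (c,d)" and ne: "(c,d) \<noteq> (x,y)"
  from a show "time c d < time x y"
  proof (cases rule: edge_cases)
    case right then show ?thesis using ne assms by auto
  qed (use c assms nbr in auto)
qed

lemma cap_has_forcer:
  assumes "1 \<le> x" "x \<le> m" "2*m+2*j < y" "y \<le> h"
  shows "\<exists>v. forces v (x,y)"
proof -
  consider (lower) "y - (2*m+2*j) \<le> h+1-y" "x + (y - (2*m+2*j)) \<le> m+1"
    | (upper) "h+1-y < y - (2*m+2*j)" "x + (h+1-y) \<le> m+1" "y < h"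
    | (top) "y = h" "2*m+2*j+1 < h"
    | (middle) "m+1 < x + min (y - (2*m+2*j)) (h+1-y)"
    using assms by (cases "y - (2*m+2*j) \<le> h+1-y") (simp_all add: min_def; linarith)+
  then show ?thesis
  proof cases
    case lower then show ?thesis using forces_cap_lower assms by blast
  next
    case upper then show ?thesis using forces_cap_upper assms by blast
  next
    case top then show ?thesis using forces_cap_top assms by blast
  next
    case middle then show ?thesis using forces_cap_middle assms by blast
  qed
qed

lemma has_forcer:
  assumes "(x,y) \<in> verts - seed"
  shows "\<exists>v. forces v (x,y)"
proof -
  have xy: "1 \<le> x" "x \<le> w" "1 \<le> y" "y \<le> h" and "\<not> (x = w \<and> seed_row y)"
    using assms unfolding verts_def seed_def by auto
  then consider (seed_row) "m \<le> x" "x < w" "seed_row y" | (free_row) "m < x" "\<not> seed_row y"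
    | (cap) "x \<le> m" "2*m+2*j < y"
    | (strip) "x \<le> m" "2*m < y" "y \<le> 2*m+2*j" "\<not> (x = m \<and> even y)"
    | (wedge) "x < m" "y \<le> 2*m" "m+1 \<le> x+y" "y \<le> m+x"
    | (below_wedge) "x < m" "x+y \<le> m" | (above_wedge) "x < m" "y \<le> 2*m" "m+x < y"
    unfolding seed_row_def by linarith
  then show ?thesis
  proof cases
    case seed_row then show ?thesis using forces_seed_row xy by blast
  next
    case free_row then show ?thesis using forces_free_row xy by blast
  next
    case cap then show ?thesis using cap_has_forcer xy by blast
  next
    case strip then show ?thesis using forces_strip xy by blast
  next
    case wedge then show ?thesis using forces_wedge xy by blast
  next
    case below_wedge then show ?thesis using forces_below_wedge xy by blast
  next
    case above_wedge then show ?thesis using forces_above_wedge xy by blast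
  qed
qed

lemma seed_subset: "seed \<subseteq> verts"
  using m_less_w unfolding seed_def verts_def by auto

lemma forcing_schedule_seed: "forcing_schedule verts edge seed (case_prod time)"
  unfolding forcing_schedule_def using has_forcer by auto

lemma card_seed: "card seed = 2*m + j"
proof -
  have rows: "{y \<in> {1..h}. seed_row y} = {1..2*m} \<union> (*) 2 ` {m+1..m+j}"
  proof (intro equalityI subsetI)
    fix y assume "y \<in> {y \<in> {1..h}. seed_row y}"
    then show "y \<in> {1..2*m} \<union> (*) 2 ` {m+1..m+j}"
      unfolding seed_row_def by (auto intro!: image_eqI[of y _ "y div 2"])
  qed (use cap_pos in \<open>auto simp: seed_row_def\<close>)
  have "card ({1..2*m} \<union> (*) 2 ` {m+1..m+j}) = 2*m + j"
    by (subst card_Un_disjoint) (auto simp: card_image inj_on_def)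
  then show ?thesis unfolding seed_def rows by (simp add: card_image inj_on_def)
qed

lemma zero_forcing_set_seed: "zero_forcing_set verts edge seed"
  by (rule forcing_schedule_zero_forcing_set[OF forcing_schedule_seed seed_subset])
    (simp add: verts_def)

end

section \<open>The bounds\<close>

lemma hprod_adj_path_reflect:
  assumes "a \<in> {1..w}" "c \<in> {1..w}"
  shows "hprod_adj path_adj {w-m+1..w} adjH (w+1-a, b) (w+1-c, d)
           = hprod_adj path_adj {1..m} adjH (a, b) (c, d)"
proof -
  have "w+1-a = w+1-c \<longleftrightarrow> a = c" "w+1-a \<in> {w-m+1..w} \<longleftrightarrow> a \<in> {1..m}"
    "path_adj (w+1-a) (w+1-c) \<longleftrightarrow> path_adj a c"
    using assms unfolding path_adj_def by auto
  then show ?thesis unfolding hprod_adj_def by simp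
qed

lemma (in left_rooted_product) zero_forcing_number_le:
  assumes "U = {1..m} \<or> U = {w - m + 1..w}"
  shows "zero_forcing_number (hprod_verts {1..w} {1..h}) (hprod_adj path_adj U (cycle_adj h)) \<le> 2*m + j"
  using assms
proof
  assume "U = {1..m}"
  then show ?thesis
    using zero_forcing_number_le_card[OF zero_forcing_set_seed] card_seed
    unfolding verts_def edge_def hprod_verts_def by simp
next
  assume U: "U = {w - m + 1..w}"
  define g where "g p = (w + 1 - fst p, snd p)" for p :: "nat \<times> nat"
  have g_verts: "g p \<in> verts" and g_invol: "g (g p) = p" if "p \<in> verts" for p
    using that unfolding g_def verts_def by auto
  have "hprod_adj path_adj U (cycle_adj h) (g p) (g q) = edge p q" if "p \<in> verts" "q \<in> verts" for p q
  proof -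
    obtain a b c d where "p = (a, b)" "q = (c, d)" by fastforce
    then show ?thesis using that hprod_adj_path_reflect[of a w c m "cycle_adj h" b d]
      unfolding U g_def edge_def verts_def by simp
  qed
  then have sched: "forcing_schedule verts (hprod_adj path_adj U (cycle_adj h)) (g ` seed) (case_prod time \<circ> g)"
    using forcing_schedule_iso[OF g_verts g_verts g_invol g_invol _ forcing_schedule_seed] by blast
  have "g ` seed \<subseteq> verts" using seed_subset g_verts by blast
  with sched have "zero_forcing_set verts (hprod_adj path_adj U (cycle_adj h)) (g ` seed)"
    by (rule forcing_schedule_zero_forcing_set) (simp add: verts_def)
  moreover have "card (g ` seed) = card seed"
    using seed_subset g_invol by (intro card_image inj_on_inverseI[of _ g]) auto
  ultimately show ?thesis
    using zero_forcing_number_le_card card_seed unfolding verts_def hprod_verts_def by metis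
qed

theorem mainTheorem7:
  fixes w h m :: nat and U :: "nat set"
  assumes "w \<ge> 2" and "h \<ge> 3" and "1 \<le> m" and "m < w"
    and "U = {1..m} \<or> U = {w - m + 1..w}"
  defines "Z \<equiv> zero_forcing_number (hprod_verts {1..w} {1..h})
                  (hprod_adj path_adj U (cycle_adj h))"
  shows "(h \<le> 2 * m \<longrightarrow> Z \<le> h)
       \<and> (2 * m < h \<and> h < 4 * m \<longrightarrow> Z \<le> 2 * m)
       \<and> (h > 4 * m \<longrightarrow> int Z \<le> \<lceil>real h / 2\<rceil>)"
proof (intro conjI impI)
  show "Z \<le> h"
    unfolding Z_def using zero_forcing_number_hprod_path_le[of w "{1..h}"] assms by simp
next
  assume "2 * m < h \<and> h < 4 * m"
  then interpret left_rooted_product w h m 0 by unfold_locales (use assms in auto)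
  show "Z \<le> 2 * m" unfolding Z_def using zero_forcing_number_le assms(5) by simp
next
  assume "h > 4 * m"
  define q where "q = (h + 1) div 2"
  have q: "2 * q \<le> h + 1" "h \<le> 2 * q" unfolding q_def by presburger+
  define j where "j = q - 2 * m"
  have "2 * m + 2 * j < h" "h \<le> 4 * m + 2 * j"
    using q assms(3) \<open>h > 4 * m\<close> unfolding j_def by linarith+
  then interpret left_rooted_product w h m j by unfold_locales (use assms in auto)
  have "Z \<le> 2 * m + j" unfolding Z_def using zero_forcing_number_le assms(5) by simp
  then have "2 * Z \<le> h + 1" using q \<open>h > 4 * m\<close> unfolding j_def by linarith
  then have "real_of_int (int Z) - 1 < real h / 2" by (simp add: field_simps)
  then show "int Z \<le> \<lceil>real h / 2\<rceil>" by (simp add: le_ceiling_iff)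
qed

end
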